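(* Let $\mathcal D=(X,\mathcal P,\mathcal B)$ be a resolvable divisible design $RGD(r,\lambda,m)$ with $r=\lambda m$, and suppose that any two blocks from different parallel classes contain exactly $\lambda$ common points. Then the incidence graph $\mathrm{Inc}(\mathcal D)$ is a distance-regular bipartite antipodal cover of $K_{r,r}$ with diameter $4$ and antipodal blocks of size $m$.
   Context: A divisible design $GD(k,\lambda,n,kn)$ is a triple $(X,\mathcal P,\mathcal B)$ where $X$ is a set of $kn$ points, $\mathcal P$ is a partition of $X$ into classes of size $n$, and $\mathcal B$ is a collection of $k$-subsets of $X$ (blocks) such that each block meets every class in exactly one point and any two points from different classes are contained in exactly $\lambda$ blocks. It is resolvable, denoted $RGD(k,\lambda,n)$, if its set of blocks is partitioned into parallel classes, i.e. subsets of $\mathcal B$ each of which is a partition of $X$ (this partition is fixed). The incidence graph $\mathrm{Inc}(\mathcal D)$ has vertex set $X\cup\mathcal B$, a point $x$ being adjacent to a block $B$ iff $x\in B$. A graph is antipodal (of diameter $d$) if being at distance $0$ or $d$ is an equivalence relation; its classes are antipodal blocks. The graph is a cover of the quotient graph $\Sigma$ on the antipodal blocks (distinct blocks adjacent iff joined by an edge) if each vertex of a block $B$ has exactly one neighbour in each block adjacent to $B$. *)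

theory Defs
  imports Main "HOL-Library.Disjoint_Sets"
begin

inductive walk :: "'v set \<Rightarrow> ('v \<Rightarrow> 'v \<Rightarrow> bool) \<Rightarrow> 'v \<Rightarrow> 'v \<Rightarrow> nat \<Rightarrow> bool"
  for V E where
  walk0: "u \<in> V \<Longrightarrow> walk V E u u 0"
| walkS: "u \<in> V \<Longrightarrow> E u v \<Longrightarrow> walk V E v w n \<Longrightarrow> walk V E u w (Suc n)"

definition gdist :: "'v set \<Rightarrow> ('v \<Rightarrow> 'v \<Rightarrow> bool) \<Rightarrow> 'v \<Rightarrow> 'v \<Rightarrow> nat" where
  "gdist V E u v = (LEAST n. walk V E u v n)"

definition gconnected :: "'v set \<Rightarrow> ('v \<Rightarrow> 'v \<Rightarrow> bool) \<Rightarrow> bool" where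
  "gconnected V E \<longleftrightarrow> (\<forall>u\<in>V. \<forall>v\<in>V. \<exists>n. walk V E u v n)"

definition has_diameter :: "'v set \<Rightarrow> ('v \<Rightarrow> 'v \<Rightarrow> bool) \<Rightarrow> nat \<Rightarrow> bool" where
  "has_diameter V E d \<longleftrightarrow> gconnected V E \<and>
     (\<forall>u\<in>V. \<forall>v\<in>V. gdist V E u v \<le> d) \<and> (\<exists>u\<in>V. \<exists>v\<in>V. gdist V E u v = d)"

definition distance_regular :: "'v set \<Rightarrow> ('v \<Rightarrow> 'v \<Rightarrow> bool) \<Rightarrow> bool" where
  "distance_regular V E \<longleftrightarrow> finite V \<and> gconnected V E \<and>
     (\<exists>b c :: nat \<Rightarrow> nat. \<forall>u\<in>V. \<forall>v\<in>V.
        card {w\<in>V. E v w \<and> gdist V E u w + 1 = gdist V E u v} = c (gdist V E u v) \<and>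
        card {w\<in>V. E v w \<and> gdist V E u w = gdist V E u v + 1} = b (gdist V E u v))"

definition bipartite :: "'v set \<Rightarrow> ('v \<Rightarrow> 'v \<Rightarrow> bool) \<Rightarrow> bool" where
  "bipartite V E \<longleftrightarrow> (\<exists>V1 V2. V1 \<inter> V2 = {} \<and> V1 \<union> V2 = V \<and>
     (\<forall>u\<in>V. \<forall>v\<in>V. E u v \<longrightarrow> (u \<in> V1 \<and> v \<in> V2) \<or> (u \<in> V2 \<and> v \<in> V1)))"

definition antirel :: "'v set \<Rightarrow> ('v \<Rightarrow> 'v \<Rightarrow> bool) \<Rightarrow> nat \<Rightarrow> ('v \<times> 'v) set" where
  "antirel V E d = {(u, v). u \<in> V \<and> v \<in> V \<and> (gdist V E u v = 0 \<or> gdist V E u v = d)}"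

definition antipodal :: "'v set \<Rightarrow> ('v \<Rightarrow> 'v \<Rightarrow> bool) \<Rightarrow> nat \<Rightarrow> bool" where
  "antipodal V E d \<longleftrightarrow> has_diameter V E d \<and> equiv V (antirel V E d)"

definition antipodal_blocks :: "'v set \<Rightarrow> ('v \<Rightarrow> 'v \<Rightarrow> bool) \<Rightarrow> nat \<Rightarrow> 'v set set" where
  "antipodal_blocks V E d = V // antirel V E d"

definition qadj :: "('v \<Rightarrow> 'v \<Rightarrow> bool) \<Rightarrow> 'v set \<Rightarrow> 'v set \<Rightarrow> bool" where
  "qadj E A A' \<longleftrightarrow> A \<noteq> A' \<and> (\<exists>x\<in>A. \<exists>y\<in>A'. E x y)"

definition is_cover_of_quotient :: "'v set \<Rightarrow> ('v \<Rightarrow> 'v \<Rightarrow> bool) \<Rightarrow> nat \<Rightarrow> bool" where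
  "is_cover_of_quotient V E d \<longleftrightarrow>
     (\<forall>A\<in>antipodal_blocks V E d. \<forall>A'\<in>antipodal_blocks V E d.
        qadj E A A' \<longrightarrow> (\<forall>x\<in>A. \<exists>!y. y \<in> A' \<and> E x y))"

definition quotient_is_Krr :: "'v set \<Rightarrow> ('v \<Rightarrow> 'v \<Rightarrow> bool) \<Rightarrow> nat \<Rightarrow> nat \<Rightarrow> bool" where
  "quotient_is_Krr V E d r \<longleftrightarrow> (\<exists>S1 S2. S1 \<inter> S2 = {} \<and> S1 \<union> S2 = antipodal_blocks V E d \<and>
     card S1 = r \<and> card S2 = r \<and>
     (\<forall>A\<in>antipodal_blocks V E d. \<forall>A'\<in>antipodal_blocks V E d.
        qadj E A A' \<longleftrightarrow> (A \<in> S1 \<and> A' \<in> S2) \<or> (A \<in> S2 \<and> A' \<in> S1)))"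

definition antipodal_cover_Krr :: "'v set \<Rightarrow> ('v \<Rightarrow> 'v \<Rightarrow> bool) \<Rightarrow> nat \<Rightarrow> nat \<Rightarrow> nat \<Rightarrow> bool" where
  "antipodal_cover_Krr V E r d m \<longleftrightarrow> antipodal V E d \<and> is_cover_of_quotient V E d \<and>
     quotient_is_Krr V E d r \<and> (\<forall>A\<in>antipodal_blocks V E d. card A = m)"

text \<open>Blocks are indexed by a set Bs (so repeated blocks are allowed); blk b is the
  point set of block b.  GD(k, lam, n, kn).\<close>

definition GD :: "nat \<Rightarrow> nat \<Rightarrow> nat \<Rightarrow> 'a set \<Rightarrow> 'a set set \<Rightarrow> 'b set \<Rightarrow> ('b \<Rightarrow> 'a set) \<Rightarrow> bool" where
  "GD k lam n X P Bs blk \<longleftrightarrow>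
     finite X \<and> card X = k * n \<and> partition_on X P \<and> (\<forall>C\<in>P. card C = n) \<and>
     finite Bs \<and>
     (\<forall>b\<in>Bs. blk b \<subseteq> X \<and> card (blk b) = k \<and> (\<forall>C\<in>P. card (blk b \<inter> C) = 1)) \<and>
     (\<forall>x\<in>X. \<forall>y\<in>X. (\<forall>C\<in>P. \<not> (x \<in> C \<and> y \<in> C)) \<longrightarrow>
        card {b\<in>Bs. x \<in> blk b \<and> y \<in> blk b} = lam)"

definition RGD :: "nat \<Rightarrow> nat \<Rightarrow> nat \<Rightarrow> 'a set \<Rightarrow> 'a set set \<Rightarrow> 'b set \<Rightarrow> ('b \<Rightarrow> 'a set)
    \<Rightarrow> 'b set set \<Rightarrow> bool" where
  "RGD r lam m X P Bs blk PC \<longleftrightarrow> GD r lam m X P Bs blk \<and> partition_on Bs PC \<and>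
     (\<forall>C\<in>PC. inj_on blk C \<and> partition_on X (blk ` C))"

definition inc_V :: "'a set \<Rightarrow> 'b set \<Rightarrow> ('a + 'b) set" where
  "inc_V X Bs = Inl ` X \<union> Inr ` Bs"

fun inc_E :: "('b \<Rightarrow> 'a set) \<Rightarrow> ('a + 'b) \<Rightarrow> ('a + 'b) \<Rightarrow> bool" where
  "inc_E blk (Inl x) (Inr b) = (x \<in> blk b)"
| "inc_E blk (Inr b) (Inl x) = (x \<in> blk b)"
| "inc_E blk _ _ = False"

end

theory Submission
  imports Defs
begin

text \<open>
  The distances in the incidence graph can be written down explicitly: two distinct points are
  at distance 2 or 4 according as they lie in different classes or in the same class, a point
  and a block are at distance 1 or 3 according as they are incident or not, and two distinct
  blocks are at distance 2 or 4 according as they lie in different parallel classes or in the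
  same one. Walks of these lengths exist because \<open>\<lambda> \<ge> 1\<close> and there are \<open>r \<ge> 2\<close> parallel
  classes; shorter walks are excluded by bipartiteness and because a block meets every class,
  and a point lies on a block of every parallel class, exactly once. Hence the antipodal classes
  are the point classes and the parallel classes, each of size \<open>m\<close>, and counting neighbours
  gives the intersection array \<open>{r, r - 1, r - \<lambda>, 1; 1, \<lambda>, r - 1, r}\<close>. The hypothesis on
  blocks of different parallel classes makes the situation self-dual: the dual design is again
  an \<open>RGD(r, \<lambda>, m)\<close> of the same kind, so every claim about blocks follows from the
  corresponding claim about points.
\<close>

lemma card_filter_eq_sum:
  "finite A \<Longrightarrow> card {x\<in>A. P x} = (\<Sum>x\<in>A. if P x then 1 else 0 :: nat)"
  by (simp add: sum.inter_filter[symmetric])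

lemma sum_card_filter_swap:
  assumes "finite A" "finite B"
  shows "(\<Sum>a\<in>A. card {b\<in>B. R a b}) = (\<Sum>b\<in>B. card {a\<in>A. R a b})"
  using assms sum.swap[where g="\<lambda>a b. if R a b then 1 else 0 :: nat" and A=A and B=B]
  by (simp add: card_filter_eq_sum)

definition same_part :: "'a set set \<Rightarrow> 'a \<Rightarrow> 'a \<Rightarrow> bool" where
  "same_part Q x y \<longleftrightarrow> (\<exists>C\<in>Q. x \<in> C \<and> y \<in> C)"

lemma same_part_iff:
  assumes "partition_on A Q" "C \<in> Q" "x \<in> C"
  shows "same_part Q x y \<longleftrightarrow> y \<in> C"
  using assms unfolding same_part_def partition_on_def disjoint_def by blast

lemma same_part_refl: "partition_on A Q \<Longrightarrow> x \<in> A \<Longrightarrow> same_part Q x x"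
  unfolding same_part_def partition_on_def by blast

lemma partition_on_partE:
  assumes "partition_on A Q" "x \<in> A"
  obtains C where "C \<in> Q" "x \<in> C"
  using assms unfolding partition_on_def by blast

lemma walk_in_vertices: "walk V E u v n \<Longrightarrow> u \<in> V \<and> v \<in> V"
  by (induction rule: walk.induct) auto

lemma walk_0_eq: "walk V E u v 0 \<Longrightarrow> u = v"
  by (erule walk.cases) auto

lemma walk_1_edge: "walk V E u v (Suc 0) \<Longrightarrow> E u v"
  by (erule walk.cases) (auto dest: walk_0_eq)

lemma walk_2_common_nbr: "walk V E u v 2 \<Longrightarrow> \<exists>w\<in>V. E u w \<and> E w v"
  by (erule walk.cases) (auto simp: numeral_2_eq_2 dest: walk_in_vertices walk_1_edge)

lemma walk_edge: "u \<in> V \<Longrightarrow> v \<in> V \<Longrightarrow> E u v \<Longrightarrow> walk V E u v (Suc 0)"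
  by (auto intro: walk.intros)

lemma walk_append: "walk V E u v m \<Longrightarrow> walk V E v w n \<Longrightarrow> walk V E u w (m + n)"
  by (induction rule: walk.induct) (auto intro: walk.intros)

lemma walk_map:
  assumes "walk V E u v n" and "\<And>a. a \<in> V \<Longrightarrow> f a \<in> V'"
    and "\<And>a b. a \<in> V \<Longrightarrow> b \<in> V \<Longrightarrow> E a b \<Longrightarrow> E' (f a) (f b)"
  shows "walk V' E' (f u) (f v) n"
  using assms(1) by induction (auto intro: walk.intros assms(2,3) dest: walk_in_vertices)

lemma gdist_eqI:
  assumes "walk V E u v d" and "\<And>n. walk V E u v n \<Longrightarrow> d \<le> n"
  shows "gdist V E u v = d"
  unfolding gdist_def using assms by (rule Least_equality)

section \<open>Incidence graphs and duality\<close>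

lemma inc_V_simps [simp]: "Inl x \<in> inc_V X Bs \<longleftrightarrow> x \<in> X" "Inr b \<in> inc_V X Bs \<longleftrightarrow> b \<in> Bs"
  unfolding inc_V_def by auto

lemma inc_E_sides: "inc_E blk u v \<Longrightarrow> isl u \<noteq> isl v"
  by (cases u; cases v) auto

lemma walk_inc_parity: "walk V (inc_E blk) u v n \<Longrightarrow> isl u = isl v \<longleftrightarrow> even n"
  by (induction rule: walk.induct) (auto dest: inc_E_sides)

lemma bipartite_inc: "bipartite (inc_V X Bs) (inc_E blk)"
  unfolding bipartite_def
proof (intro exI conjI ballI impI)
  fix u v assume "u \<in> inc_V X Bs" "v \<in> inc_V X Bs" "inc_E blk u v"
  then show "u \<in> Inl ` X \<and> v \<in> Inr ` Bs \<or> u \<in> Inr ` Bs \<and> v \<in> Inl ` X"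
    by (cases u; cases v) auto
qed (auto simp: inc_V_def)

fun sum_swap :: "'a + 'b \<Rightarrow> 'b + 'a" where
  "sum_swap (Inl x) = Inr x"
| "sum_swap (Inr y) = Inl y"

lemma sum_swap_swap [simp]: "sum_swap (sum_swap u) = u"
  by (cases u) auto

lemma sum_swap_inc_V [simp]: "sum_swap u \<in> inc_V Bs X \<longleftrightarrow> u \<in> inc_V X Bs"
  by (cases u) auto

abbreviation dual_blk :: "'b set \<Rightarrow> ('b \<Rightarrow> 'a set) \<Rightarrow> 'a \<Rightarrow> 'b set" where
  "dual_blk Bs blk x \<equiv> {b\<in>Bs. x \<in> blk b}"

lemma inc_E_dual:
  "u \<in> inc_V X Bs \<Longrightarrow> v \<in> inc_V X Bs \<Longrightarrow>
    inc_E (dual_blk Bs blk) (sum_swap u) (sum_swap v) \<longleftrightarrow> inc_E blk u v"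
  by (cases u; cases v) auto

lemma walk_inc_dual:
  "walk (inc_V Bs X) (inc_E (dual_blk Bs blk)) (sum_swap u) (sum_swap v) n \<longleftrightarrow>
    walk (inc_V X Bs) (inc_E blk) u v n"
proof
  assume "walk (inc_V Bs X) (inc_E (dual_blk Bs blk)) (sum_swap u) (sum_swap v) n"
  from walk_map[OF this, of sum_swap] show "walk (inc_V X Bs) (inc_E blk) u v n"
    using inc_E_dual[of "sum_swap a" X Bs "sum_swap b" blk for a b] by simp
next
  assume "walk (inc_V X Bs) (inc_E blk) u v n"
  from walk_map[OF this, of sum_swap]
  show "walk (inc_V Bs X) (inc_E (dual_blk Bs blk)) (sum_swap u) (sum_swap v) n"
    using inc_E_dual[of _ X Bs _ blk] by simp
qed

lemma gdist_inc_dual: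
  "gdist (inc_V Bs X) (inc_E (dual_blk Bs blk)) (sum_swap u) (sum_swap v) =
    gdist (inc_V X Bs) (inc_E blk) u v"
  unfolding gdist_def walk_inc_dual ..

fun inc_dist :: "'a set set \<Rightarrow> 'b set set \<Rightarrow> ('b \<Rightarrow> 'a set) \<Rightarrow> 'a + 'b \<Rightarrow> 'a + 'b \<Rightarrow> nat" where
  "inc_dist P PC blk (Inl x) (Inl y) = (if x = y then 0 else if same_part P x y then 4 else 2)"
| "inc_dist P PC blk (Inr a) (Inr b) = (if a = b then 0 else if same_part PC a b then 4 else 2)"
| "inc_dist P PC blk (Inl x) (Inr b) = (if x \<in> blk b then 1 else 3)"
| "inc_dist P PC blk (Inr b) (Inl x) = (if x \<in> blk b then 1 else 3)"

lemma inc_dist_le_4: "inc_dist P PC blk u v \<le> 4"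
  by (cases u; cases v) auto

lemma inc_dist_dual:
  "u \<in> inc_V X Bs \<Longrightarrow> v \<in> inc_V X Bs \<Longrightarrow>
    inc_dist PC P (dual_blk Bs blk) (sum_swap u) (sum_swap v) = inc_dist P PC blk u v"
  by (cases u; cases v) auto

lemma inj_sum_swap: "inj sum_swap"
  by (metis injI sum_swap_swap)

lemma Collect_inc_V_dual: "{w\<in>inc_V Bs X. Q w} = sum_swap ` {w\<in>inc_V X Bs. Q (sum_swap w)}"
  by (auto intro: image_eqI[where x = "sum_swap w" for w])

lemma card_inc_nbrs_dual:
  assumes "v \<in> inc_V X Bs"
  shows "card {w\<in>inc_V Bs X. inc_E (dual_blk Bs blk) (sum_swap v) w \<and>
              R (gdist (inc_V Bs X) (inc_E (dual_blk Bs blk)) (sum_swap u) w)} =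
         card {w\<in>inc_V X Bs. inc_E blk v w \<and> R (gdist (inc_V X Bs) (inc_E blk) u w)}"
  using assms unfolding Collect_inc_V_dual[of Bs X]
  by (simp add: card_image inj_on_subset[OF inj_sum_swap] inc_E_dual gdist_inc_dual cong: conj_cong)

section \<open>Resolvable divisible designs\<close>

locale rgd =
  fixes X :: "'a set" and P :: "'a set set" and Bs :: "'b set" and blk :: "'b \<Rightarrow> 'a set"
    and PC :: "'b set set" and k lam n :: nat
  assumes rgd: "RGD k lam n X P Bs blk PC"
begin

lemma finite_points: "finite X"
  and card_points: "card X = k * n"
  and point_classes: "partition_on X P"
  and card_point_class: "C \<in> P \<Longrightarrow> card C = n"
  and finite_blocks: "finite Bs"
  and block_subset: "b \<in> Bs \<Longrightarrow> blk b \<subseteq> X"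
  and card_block: "b \<in> Bs \<Longrightarrow> card (blk b) = k"
  and card_block_Int_class: "b \<in> Bs \<Longrightarrow> C \<in> P \<Longrightarrow> card (blk b \<inter> C) = 1"
  and card_common_blocks: "x \<in> X \<Longrightarrow> y \<in> X \<Longrightarrow> \<not> same_part P x y \<Longrightarrow>
    card {b\<in>Bs. x \<in> blk b \<and> y \<in> blk b} = lam"
  and parallel_classes: "partition_on Bs PC"
  and inj_on_parallel_class: "Q \<in> PC \<Longrightarrow> inj_on blk Q"
  and parallel_class_partition: "Q \<in> PC \<Longrightarrow> partition_on X (blk ` Q)"
  using rgd unfolding RGD_def GD_def same_part_def by auto

lemma finite_block: "b \<in> Bs \<Longrightarrow> finite (blk b)"
  using block_subset finite_points by (rule finite_subset)

lemma point_class_subset: "C \<in> P \<Longrightarrow> C \<subseteq> X"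
  using point_classes unfolding partition_on_def by blast

lemma point_class_nonempty: "C \<in> P \<Longrightarrow> C \<noteq> {}"
  using partition_onD3[OF point_classes] by blast

lemma finite_point_class: "C \<in> P \<Longrightarrow> finite C"
  using point_class_subset finite_points by (rule finite_subset)

lemma parallel_class_subset: "C \<in> PC \<Longrightarrow> C \<subseteq> Bs"
  using parallel_classes unfolding partition_on_def by blast

lemma finite_parallel_class: "C \<in> PC \<Longrightarrow> finite C"
  using parallel_class_subset finite_blocks by (rule finite_subset)

lemma block_through_point:
  assumes "C \<in> PC" "x \<in> X"
  obtains b where "b \<in> C" "x \<in> blk b"
  using parallel_class_partition[OF assms(1)] assms(2) unfolding partition_on_def by blast

lemma parallel_blocks_disjoint:
  assumes "a \<in> Bs" "same_part PC a b" "a \<noteq> b"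
  shows "blk a \<inter> blk b = {}"
proof -
  obtain C where C: "C \<in> PC" "a \<in> C" "b \<in> C" using assms(2) unfolding same_part_def by blast
  then have "blk a \<noteq> blk b" using inj_on_parallel_class assms(3) by (auto dest: inj_onD)
  then show ?thesis
    using parallel_class_partition[OF C(1)] C unfolding partition_on_def disjoint_def by blast
qed

lemma block_Int_class_singleton:
  assumes "b \<in> Bs" "C \<in> P"
  obtains y where "blk b \<inter> C = {y}"
  using card_block_Int_class[OF assms] by (auto simp: card_1_singleton_iff)

lemma block_points_not_same_class:
  assumes "b \<in> Bs" "x \<in> blk b" "y \<in> blk b" "x \<noteq> y"
  shows "\<not> same_part P x y"
proof
  assume "same_part P x y"
  then obtain C where "C \<in> P" "x \<in> C" "y \<in> C" unfolding same_part_def by blast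
  with assms show False by (metis IntI block_Int_class_singleton singletonD)
qed

lemma card_classes: "n > 0 \<Longrightarrow> card P = k"
proof -
  assume "n > 0"
  have "card X = (\<Sum>C\<in>P. card C)"
    using point_classes finite_point_class by (rule product_partition)
  also have "\<dots> = card P * n" using card_point_class by simp
  finally show ?thesis using card_points \<open>n > 0\<close> by simp
qed

lemma card_parallel_class:
  assumes "k > 0" "C \<in> PC"
  shows "card C = n"
proof -
  have "card X = (\<Sum>B\<in>blk ` C. card B)"
    using parallel_class_partition[OF assms(2)]
    by (rule product_partition) (use finite_block parallel_class_subset[OF assms(2)] in blast)
  also have "\<dots> = (\<Sum>b\<in>C. card (blk b))"
    using sum.reindex[OF inj_on_parallel_class[OF assms(2)]] by simp
  also have "\<dots> = card C * k"
    using card_block parallel_class_subset[OF assms(2)] by (simp add: subset_iff)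
  finally show ?thesis using card_points assms(1) by simp
qed

lemma card_parallel_blocks_through_point:
  assumes "C \<in> PC" "x \<in> X"
  shows "card {b\<in>C. x \<in> blk b} = 1"
proof -
  obtain b where b: "b \<in> C" "x \<in> blk b" using block_through_point[OF assms] .
  have "{b'\<in>C. x \<in> blk b'} = {b}"
  proof safe
    fix b' assume "b' \<in> C" "x \<in> blk b'"
    moreover have "b' \<in> Bs" using \<open>b' \<in> C\<close> parallel_class_subset[OF assms(1)] by blast
    ultimately show "b' = b"
      using parallel_blocks_disjoint[of b' b] assms(1) b unfolding same_part_def by blast
  qed (use b in auto)
  then show ?thesis by simp
qed

lemma card_blocks_through_point:
  assumes "x \<in> X"
  shows "card {b\<in>Bs. x \<in> blk b} = card PC"
proof -
  have "card {b\<in>Bs. x \<in> blk b} = (\<Sum>b\<in>Bs. if x \<in> blk b then 1 else 0)"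
    using finite_blocks by (rule card_filter_eq_sum)
  also have "\<dots> = (\<Sum>C\<in>PC. \<Sum>b\<in>C. if x \<in> blk b then 1 else 0)"
    by (rule sum.partition[OF finite_blocks parallel_classes])
  also have "\<dots> = (\<Sum>C\<in>PC. card {b\<in>C. x \<in> blk b})"
    using finite_parallel_class by (simp add: card_filter_eq_sum)
  also have "\<dots> = card PC"
    using card_parallel_blocks_through_point[OF _ assms] by simp
  finally show ?thesis .
qed

text \<open>Double counting of the pairs (y, b) with x, y \<in> blk b and y outside the class of x.\<close>

lemma card_parallel_classes:
  assumes "k \<ge> 2" "n > 0"
  shows "card PC = lam * n"
proof -
  obtain C where C: "C \<in> P" using card_classes[OF assms(2)] assms(1) by fastforce
  obtain x where x: "x \<in> C" using point_class_nonempty[OF C] by blast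
  have xX: "x \<in> X" using C x point_classes unfolding partition_on_def by blast
  define Bx where "Bx = {b\<in>Bs. x \<in> blk b}"
  have "(\<Sum>b\<in>Bx. card {y\<in>X - C. y \<in> blk b}) = (\<Sum>y\<in>X - C. card {b\<in>Bx. y \<in> blk b})"
    unfolding Bx_def using finite_blocks finite_points by (intro sum_card_filter_swap) auto
  moreover have "card {y\<in>X - C. y \<in> blk b} = k - 1" if "b \<in> Bx" for b
  proof -
    have b: "b \<in> Bs" "x \<in> blk b" using that unfolding Bx_def by auto
    obtain z where "blk b \<inter> C = {z}" using block_Int_class_singleton[OF b(1) C] .
    then have "blk b \<inter> C = {x}" using b(2) x by auto
    then have "{y\<in>X - C. y \<in> blk b} = blk b - {x}" using block_subset[OF b(1)] by blast
    then show ?thesis using card_block[OF b(1)] b(2) finite_block[OF b(1)] by simp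
  qed
  moreover have "card {b\<in>Bx. y \<in> blk b} = lam" if "y \<in> X - C" for y
  proof -
    have "\<not> same_part P x y" using same_part_iff[OF point_classes C x] that by blast
    then show ?thesis unfolding Bx_def using card_common_blocks[OF xX] that by simp
  qed
  moreover have "card (X - C) = (k - 1) * n"
    using card_Diff_subset[OF finite_point_class point_class_subset, OF C C]
    by (simp add: card_points card_point_class[OF C] diff_mult_distrib)
  ultimately have "card Bx * (k - 1) = (k - 1) * n * lam" by simp
  moreover have "card Bx = card PC" unfolding Bx_def by (rule card_blocks_through_point[OF xX])
  ultimately show ?thesis using assms(1) by simp
qed

end

section \<open>Symmetric resolvable designs and their incidence graphs\<close>

definition intersection_c :: "nat \<Rightarrow> nat \<Rightarrow> nat \<Rightarrow> nat" where
  "intersection_c r lam i = [0, 1, lam, r - 1, r] ! i"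

definition intersection_b :: "nat \<Rightarrow> nat \<Rightarrow> nat \<Rightarrow> nat" where
  "intersection_b r lam i = [r, r - 1, r - lam, 1, 0] ! i"

locale symmetric_rgd = rgd X P Bs blk PC r lam m
  for X :: "'a set" and P :: "'a set set" and Bs :: "'b set" and blk :: "'b \<Rightarrow> 'a set"
    and PC :: "'b set set" and r lam m :: nat +
  assumes r_eq: "r = lam * m" and lam_pos: "lam \<ge> 1" and m_ge_2: "m \<ge> 2"
    and card_Int_parallel_blocks: "\<forall>C1\<in>PC. \<forall>C2\<in>PC. C1 \<noteq> C2 \<longrightarrow>
      (\<forall>b1\<in>C1. \<forall>b2\<in>C2. card (blk b1 \<inter> blk b2) = lam)"
begin

lemma r_ge_2: "r \<ge> 2"
  using r_eq lam_pos m_ge_2 by (metis le_trans mult_le_mono1 mult_1)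

lemma card_point_classes: "card P = r"
  using card_classes m_ge_2 by simp

lemma card_parallel_class_eq: "C \<in> PC \<Longrightarrow> card C = m"
  using card_parallel_class r_ge_2 by simp

lemma card_parallel_classes_eq: "card PC = r"
  using card_parallel_classes r_ge_2 m_ge_2 r_eq by (simp add: mult.commute)

lemma point_degree: "x \<in> X \<Longrightarrow> card {b\<in>Bs. x \<in> blk b} = r"
  using card_blocks_through_point card_parallel_classes_eq by simp

lemma card_block_Int:
  assumes "a \<in> Bs" "b \<in> Bs" "\<not> same_part PC a b"
  shows "card (blk a \<inter> blk b) = lam"
proof -
  obtain C1 where "C1 \<in> PC" "a \<in> C1" using parallel_classes assms(1) by (rule partition_on_partE)
  moreover obtain C2 where "C2 \<in> PC" "b \<in> C2" using parallel_classes assms(2) by (rule partition_on_partE)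
  ultimately show ?thesis using card_Int_parallel_blocks assms(3) unfolding same_part_def by blast
qed

lemma common_block:
  assumes "x \<in> X" "y \<in> X" "\<not> same_part P x y"
  obtains b where "b \<in> Bs" "x \<in> blk b" "y \<in> blk b"
proof -
  have "{b\<in>Bs. x \<in> blk b \<and> y \<in> blk b} \<noteq> {}"
    using card_common_blocks[OF assms] lam_pos by (metis card.empty not_one_le_zero)
  then show ?thesis using that by blast
qed

lemma common_point:
  assumes "a \<in> Bs" "b \<in> Bs" "\<not> same_part PC a b"
  obtains y where "y \<in> blk a" "y \<in> blk b"
  using card_block_Int[OF assms] lam_pos that by (metis card.empty disjoint_iff not_one_le_zero)

lemma card_blocks: "card Bs = r * m"
proof -
  have "card Bs = (\<Sum>C\<in>PC. card C)"
    using parallel_classes finite_parallel_class by (rule product_partition)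
  then show ?thesis using card_parallel_class_eq card_parallel_classes_eq by simp
qed

lemma inj_on_dual_blk: "C \<in> P \<Longrightarrow> inj_on (dual_blk Bs blk) C"
proof (rule inj_onI)
  fix x y assume C: "C \<in> P" and xy: "x \<in> C" "y \<in> C" "dual_blk Bs blk x = dual_blk Bs blk y"
  have xX: "x \<in> X" using C xy(1) point_class_subset by blast
  obtain Q where Q: "Q \<in> PC" using card_parallel_classes_eq r_ge_2 by fastforce
  obtain b where b: "b \<in> Q" "x \<in> blk b" using block_through_point[OF Q xX] .
  have "b \<in> Bs" using b(1) Q parallel_class_subset by blast
  moreover have "y \<in> blk b" using xy(3) b \<open>b \<in> Bs\<close> by blast
  moreover have "same_part P x y" using C xy unfolding same_part_def by blast
  ultimately show "x = y" using block_points_not_same_class b(2) by blast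
qed

lemma dual_blk_partition: "C \<in> P \<Longrightarrow> partition_on Bs (dual_blk Bs blk ` C)"
proof (rule partition_onI)
  assume C: "C \<in> P"
  show "\<Union>(dual_blk Bs blk ` C) = Bs"
  proof safe
    fix b assume "b \<in> Bs"
    then obtain y where "blk b \<inter> C = {y}" using C by (rule block_Int_class_singleton)
    then show "b \<in> \<Union>(dual_blk Bs blk ` C)" using \<open>b \<in> Bs\<close> by blast
  qed
  show "disjnt p q"
    if pq: "p \<in> dual_blk Bs blk ` C" "q \<in> dual_blk Bs blk ` C" "p \<noteq> q" for p q
  proof -
    obtain x y where "x \<in> C" "y \<in> C" "p = dual_blk Bs blk x" "q = dual_blk Bs blk y"
      using pq(1,2) by blast
    moreover have "same_part P x y" using C calculation(1,2) unfolding same_part_def by blast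
    ultimately show ?thesis using block_points_not_same_class pq(3) unfolding disjnt_def by blast
  qed
  show "{} \<notin> dual_blk Bs blk ` C"
  proof
    assume "{} \<in> dual_blk Bs blk ` C"
    then obtain x where "x \<in> X" "dual_blk Bs blk x = {}" using point_class_subset[OF C] by blast
    then show False using point_degree r_ge_2 by (metis card.empty not_numeral_le_zero)
  qed
qed

lemma symmetric_rgd_dual: "symmetric_rgd Bs PC X (dual_blk Bs blk) P r lam m"
proof unfold_locales
  show "RGD r lam m Bs PC X (dual_blk Bs blk) P"
    unfolding RGD_def GD_def
  proof (intro conjI ballI impI)
    fix x C assume "x \<in> X" "C \<in> PC"
    then have "dual_blk Bs blk x \<inter> C = {b\<in>C. x \<in> blk b}" using parallel_class_subset by blast
    then show "card (dual_blk Bs blk x \<inter> C) = 1"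
      using card_parallel_blocks_through_point[OF \<open>C \<in> PC\<close> \<open>x \<in> X\<close>] by simp
  next
    fix a b assume ab: "a \<in> Bs" "b \<in> Bs" "\<forall>C\<in>PC. \<not> (a \<in> C \<and> b \<in> C)"
    then have "{x\<in>X. a \<in> dual_blk Bs blk x \<and> b \<in> dual_blk Bs blk x} = blk a \<inter> blk b"
      using block_subset by blast
    then show "card {x\<in>X. a \<in> dual_blk Bs blk x \<and> b \<in> dual_blk Bs blk x} = lam"
      using card_block_Int ab unfolding same_part_def by simp
  qed (use finite_blocks card_blocks parallel_classes card_parallel_class_eq finite_points
        point_degree point_classes inj_on_dual_blk dual_blk_partition in auto)
  show "\<forall>C1\<in>P. \<forall>C2\<in>P. C1 \<noteq> C2 \<longrightarrow>
      (\<forall>x1\<in>C1. \<forall>x2\<in>C2. card (dual_blk Bs blk x1 \<inter> dual_blk Bs blk x2) = lam)"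
  proof (intro ballI impI)
    fix C1 C2 x1 x2 assume C: "C1 \<in> P" "C2 \<in> P" "C1 \<noteq> C2" and x: "x1 \<in> C1" "x2 \<in> C2"
    have "x2 \<notin> C1" using point_classes C x unfolding partition_on_def disjoint_def by blast
    then have "\<not> same_part P x1 x2" using same_part_iff[OF point_classes C(1) x(1)] by blast
    moreover have "x1 \<in> X" "x2 \<in> X" using C x point_class_subset by blast+
    moreover have "dual_blk Bs blk x1 \<inter> dual_blk Bs blk x2 = {b\<in>Bs. x1 \<in> blk b \<and> x2 \<in> blk b}"
      by blast
    ultimately show "card (dual_blk Bs blk x1 \<inter> dual_blk Bs blk x2) = lam"
      using card_common_blocks by simp
  qed
qed (fact r_eq lam_pos m_ge_2)+

abbreviation "V \<equiv> inc_V X Bs"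
abbreviation "E \<equiv> inc_E blk"
abbreviation "D \<equiv> inc_dist P PC blk"

lemma walk_point_block_3:
  assumes x: "x \<in> X" and b: "b \<in> Bs"
  shows "walk V E (Inl x) (Inr b) 3"
proof -
  obtain Q where Q: "Q \<in> PC" "b \<notin> Q"
  proof -
    obtain Q0 where "Q0 \<in> PC" "b \<in> Q0" using parallel_classes b by (rule partition_on_partE)
    moreover have "PC \<noteq> {Q0}" using card_parallel_classes_eq r_ge_2 by auto
    ultimately show ?thesis using that parallel_classes unfolding partition_on_def disjoint_def by blast
  qed
  obtain b' where b': "b' \<in> Q" "x \<in> blk b'" using block_through_point[OF Q(1) x] .
  have b'_block: "b' \<in> Bs" using b'(1) Q(1) parallel_class_subset by blast
  have "\<not> same_part PC b' b" using same_part_iff[OF parallel_classes Q(1) b'(1)] Q(2) by blast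
  then obtain y where y: "y \<in> blk b'" "y \<in> blk b" by (rule common_point[OF b'_block b])
  have "y \<in> X" using y(2) b block_subset by blast
  then have "walk V E (Inl x) (Inr b') 1" "walk V E (Inr b') (Inl y) 1" "walk V E (Inl y) (Inr b) 1"
    using x b b'_block b'(2) y by (auto intro: walk_edge)
  then have "walk V E (Inl x) (Inr b) (1 + (1 + 1))" by (blast intro: walk_append)
  then show ?thesis by (simp add: eval_nat_numeral)
qed

lemma walk_from_point:
  assumes x: "x \<in> X" and v: "v \<in> V"
  shows "walk V E (Inl x) v (D (Inl x) v)"
proof (cases v)
  case (Inl y)
  then have y: "y \<in> X" using v by simp
  consider "x = y" | "x \<noteq> y" "same_part P x y" | "\<not> same_part P x y"
    using same_part_refl[OF point_classes x] by blast
  then show ?thesis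
  proof cases
    case 1
    then show ?thesis using Inl x by (auto intro: walk0)
  next
    case 2
    obtain Q where "Q \<in> PC" using card_parallel_classes_eq r_ge_2 by fastforce
    then obtain b where b: "b \<in> Q" "y \<in> blk b" using y by (rule block_through_point)
    with \<open>Q \<in> PC\<close> have "b \<in> Bs" using parallel_class_subset by blast
    then have "walk V E (Inl x) (Inr b) 3" "walk V E (Inr b) (Inl y) 1"
      using x y b(2) by (auto intro: walk_point_block_3 walk_edge)
    then have "walk V E (Inl x) (Inl y) (3 + 1)" by (rule walk_append)
    then show ?thesis using Inl 2 by simp
  next
    case 3
    obtain b where "b \<in> Bs" "x \<in> blk b" "y \<in> blk b" by (rule common_block[OF x y 3])
    then have "walk V E (Inl x) (Inr b) 1" "walk V E (Inr b) (Inl y) 1"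
      using x y by (auto intro: walk_edge)
    then have "walk V E (Inl x) (Inl y) (1 + 1)" by (rule walk_append)
    then show ?thesis using Inl 3 same_part_refl[OF point_classes x] by (auto simp: eval_nat_numeral)
  qed
next
  case (Inr b)
  then have b: "b \<in> Bs" using v by simp
  show ?thesis
  proof (cases "x \<in> blk b")
    case True
    then show ?thesis using Inr x b by (simp add: walk_edge)
  next
    case False
    then show ?thesis using Inr walk_point_block_3[OF x b] by simp
  qed
qed

lemma inc_dist_from_point_le_walk:
  assumes x: "x \<in> X" and w: "walk V E (Inl x) v n"
  shows "D (Inl x) v \<le> n"
proof -
  consider "n = 0" | "n = 1" | "n = 2" | "n \<ge> 3" by linarith
  then show ?thesis
  proof cases
    case 1
    then show ?thesis using w by (auto dest: walk_0_eq)
  next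
    case 2
    have "E (Inl x) v" using w 2 by (simp add: walk_1_edge)
    then show ?thesis using 2 by (cases v) auto
  next
    case 3
    obtain w' where "w' \<in> V" "E (Inl x) w'" "E w' v"
      using walk_2_common_nbr[OF w[unfolded 3]] by blast
    then obtain b y where "b \<in> Bs" "x \<in> blk b" "y \<in> blk b" "v = Inl y"
      by (cases w'; cases v) auto
    then show ?thesis using 3 block_points_not_same_class by auto
  next
    case 4
    show ?thesis
    proof (cases v)
      case (Inl y)
      then have "even n" using walk_inc_parity[OF w] by simp
      then have "n \<ge> 4" using 4 by presburger
      then show ?thesis using inc_dist_le_4[of P PC blk "Inl x" v] by linarith
    qed (use 4 in auto)
  qed
qed

lemma walk_inc_dist:
  assumes u: "u \<in> V" and v: "v \<in> V"
  shows "walk V E u v (D u v)"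
proof (cases u)
  case (Inl x)
  then show ?thesis using u v walk_from_point by simp
next
  case (Inr b)
  interpret dual: symmetric_rgd Bs PC X "dual_blk Bs blk" P r lam m by (rule symmetric_rgd_dual)
  have "walk dual.V dual.E (sum_swap u) (sum_swap v) (dual.D (sum_swap u) (sum_swap v))"
    using u v Inr dual.walk_from_point[of b "sum_swap v"] by simp
  then show ?thesis using u v by (simp add: walk_inc_dual inc_dist_dual)
qed

lemma inc_dist_le_walk:
  assumes u: "u \<in> V" and w: "walk V E u v n"
  shows "D u v \<le> n"
proof (cases u)
  case (Inl x)
  then show ?thesis using u w inc_dist_from_point_le_walk by simp
next
  case (Inr b)
  interpret dual: symmetric_rgd Bs PC X "dual_blk Bs blk" P r lam m by (rule symmetric_rgd_dual)
  have "walk dual.V dual.E (sum_swap u) (sum_swap v) n"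
    using w by (simp add: walk_inc_dual)
  then have "dual.D (sum_swap u) (sum_swap v) \<le> n"
    using u Inr dual.inc_dist_from_point_le_walk[of b] by simp
  then show ?thesis using u walk_in_vertices[OF w] by (simp add: inc_dist_dual)
qed

lemma gdist_eq_inc_dist: "u \<in> V \<Longrightarrow> v \<in> V \<Longrightarrow> gdist V E u v = D u v"
  by (rule gdist_eqI[OF walk_inc_dist inc_dist_le_walk])

lemma blocks_through_point_counts_from_point:
  assumes x: "x \<in> X" and y: "y \<in> X"
  defines "d \<equiv> D (Inl x) (Inl y)"
  shows "card {b\<in>Bs. y \<in> blk b \<and> D (Inl x) (Inr b) + 1 = d} = intersection_c r lam d \<and>
    card {b\<in>Bs. y \<in> blk b \<and> D (Inl x) (Inr b) = d + 1} = intersection_b r lam d"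
proof -
  let ?By = "{b\<in>Bs. y \<in> blk b}" and ?Bxy = "{b\<in>Bs. x \<in> blk b \<and> y \<in> blk b}"
  consider "x = y" | "x \<noteq> y" "same_part P x y" | "\<not> same_part P x y"
    using same_part_refl[OF point_classes x] by blast
  then show ?thesis
  proof cases
    case 1
    then have "d = 0" "{b\<in>Bs. y \<in> blk b \<and> D (Inl x) (Inr b) = d + 1} = ?By"
      unfolding d_def by auto
    then show ?thesis using point_degree[OF y] by (simp add: intersection_c_def intersection_b_def)
  next
    case 2
    then have "x \<notin> blk b" if "b \<in> Bs" "y \<in> blk b" for b
      using block_points_not_same_class[OF that(1) _ that(2)] by blast
    then have "d = 4" "{b\<in>Bs. y \<in> blk b \<and> D (Inl x) (Inr b) + 1 = d} = ?By"
      using 2 unfolding d_def by auto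
    then show ?thesis using point_degree[OF y] by (simp add: intersection_c_def intersection_b_def)
  next
    case 3
    then have "x \<noteq> y" using same_part_refl[OF point_classes x] by blast
    have "?Bxy \<subseteq> ?By" "card ?Bxy = lam" using card_common_blocks[OF x y 3] by auto
    then have "card (?By - ?Bxy) = r - lam"
      using point_degree[OF y] finite_blocks by (simp add: card_Diff_subset finite_subset)
    moreover have "d = 2" "{b\<in>Bs. y \<in> blk b \<and> D (Inl x) (Inr b) + 1 = d} = ?Bxy"
      "{b\<in>Bs. y \<in> blk b \<and> D (Inl x) (Inr b) = d + 1} = ?By - ?Bxy"
      using 3 \<open>x \<noteq> y\<close> unfolding d_def by auto
    ultimately show ?thesis using \<open>card ?Bxy = lam\<close>
      by (simp add: intersection_c_def intersection_b_def)
  qed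
qed

lemma blocks_through_point_counts_from_block:
  assumes a: "a \<in> Bs" and y: "y \<in> X"
  defines "d \<equiv> D (Inr a) (Inl y)"
  shows "card {b\<in>Bs. y \<in> blk b \<and> D (Inr a) (Inr b) + 1 = d} = intersection_c r lam d \<and>
    card {b\<in>Bs. y \<in> blk b \<and> D (Inr a) (Inr b) = d + 1} = intersection_b r lam d"
proof -
  obtain Q where Q: "Q \<in> PC" "a \<in> Q" using parallel_classes a by (rule partition_on_partE)
  let ?By = "{b\<in>Bs. y \<in> blk b}" and ?Qy = "{b\<in>Q. y \<in> blk b}"
  have "?Qy \<subseteq> ?By" "card ?Qy = 1"
    using parallel_class_subset[OF Q(1)] card_parallel_blocks_through_point[OF Q(1) y] by auto
  then have "card (?By - ?Qy) = r - 1"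
    using point_degree[OF y] finite_blocks by (simp add: card_Diff_subset finite_subset)
  have same_Q: "same_part PC a b \<longleftrightarrow> b \<in> Q" for b using same_part_iff[OF parallel_classes Q] .
  show ?thesis
  proof (cases "y \<in> blk a")
    case True
    then have "a \<in> ?Qy" using Q(2) by simp
    then have "?Qy = {a}" using \<open>card ?Qy = 1\<close> by (metis card_1_singletonE singletonD)
    then have "d = 1" "{b\<in>Bs. y \<in> blk b \<and> D (Inr a) (Inr b) + 1 = d} = ?Qy"
      "{b\<in>Bs. y \<in> blk b \<and> D (Inr a) (Inr b) = d + 1} = ?By - ?Qy"
      using True same_Q parallel_class_subset[OF Q(1)] unfolding d_def by auto
    then show ?thesis using \<open>card ?Qy = 1\<close> \<open>card (?By - ?Qy) = r - 1\<close>
      by (simp add: intersection_c_def intersection_b_def)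
  next
    case False
    then have "d = 3" "{b\<in>Bs. y \<in> blk b \<and> D (Inr a) (Inr b) + 1 = d} = ?By - ?Qy"
      "{b\<in>Bs. y \<in> blk b \<and> D (Inr a) (Inr b) = d + 1} = ?Qy"
      using same_Q parallel_class_subset[OF Q(1)] unfolding d_def by auto
    then show ?thesis using \<open>card ?Qy = 1\<close> \<open>card (?By - ?Qy) = r - 1\<close>
      by (simp add: intersection_c_def intersection_b_def)
  qed
qed

lemma intersection_numbers_at_point:
  assumes u: "u \<in> V" and y: "y \<in> X"
  shows "card {w\<in>V. E (Inl y) w \<and> gdist V E u w + 1 = gdist V E u (Inl y)} =
      intersection_c r lam (gdist V E u (Inl y)) \<and>
    card {w\<in>V. E (Inl y) w \<and> gdist V E u w = gdist V E u (Inl y) + 1} =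
      intersection_b r lam (gdist V E u (Inl y))"
proof -
  have nbrs: "{w\<in>V. E (Inl y) w \<and> R (gdist V E u w)} = Inr ` {b\<in>Bs. y \<in> blk b \<and> R (D u (Inr b))}"
    for R
  proof (rule set_eqI)
    fix w show "w \<in> {w\<in>V. E (Inl y) w \<and> R (gdist V E u w)} \<longleftrightarrow>
        w \<in> Inr ` {b\<in>Bs. y \<in> blk b \<and> R (D u (Inr b))}"
      using u by (cases w) (auto simp: gdist_eq_inc_dist)
  qed
  have card_nbrs: "card {w\<in>V. E (Inl y) w \<and> R (gdist V E u w)} =
      card {b\<in>Bs. y \<in> blk b \<and> R (D u (Inr b))}" for R
    unfolding nbrs by (simp add: card_image)
  have "card {b\<in>Bs. y \<in> blk b \<and> D u (Inr b) + 1 = D u (Inl y)} = intersection_c r lam (D u (Inl y)) \<and>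
    card {b\<in>Bs. y \<in> blk b \<and> D u (Inr b) = D u (Inl y) + 1} = intersection_b r lam (D u (Inl y))"
  proof (cases u)
    case (Inl x)
    with u have "x \<in> X" by simp
    then show ?thesis unfolding Inl by (rule blocks_through_point_counts_from_point[OF _ y])
  next
    case (Inr a)
    with u have "a \<in> Bs" by simp
    then show ?thesis unfolding Inr by (rule blocks_through_point_counts_from_block[OF _ y])
  qed
  then show ?thesis
    using card_nbrs[of "\<lambda>d. d + 1 = D u (Inl y)"] card_nbrs[of "\<lambda>d. d = D u (Inl y) + 1"]
      gdist_eq_inc_dist[OF u] y by simp
qed

lemma intersection_numbers:
  assumes u: "u \<in> V" and v: "v \<in> V"
  shows "card {w\<in>V. E v w \<and> gdist V E u w + 1 = gdist V E u v} = intersection_c r lam (gdist V E u v) \<and>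
    card {w\<in>V. E v w \<and> gdist V E u w = gdist V E u v + 1} = intersection_b r lam (gdist V E u v)"
proof (cases v)
  case (Inl y)
  then show ?thesis using u v intersection_numbers_at_point by simp
next
  case (Inr b)
  interpret dual: symmetric_rgd Bs PC X "dual_blk Bs blk" P r lam m by (rule symmetric_rgd_dual)
  have "sum_swap u \<in> dual.V" "b \<in> Bs" using u v Inr by auto
  from dual.intersection_numbers_at_point[OF this] show ?thesis
    using card_inc_nbrs_dual[OF v, where R = "\<lambda>d. d + 1 = gdist V E u v" and u = u]
      card_inc_nbrs_dual[OF v, where R = "\<lambda>d. d = gdist V E u v + 1" and u = u]
    by (simp add: Inr gdist_inc_dual[of Bs X blk u v, unfolded Inr, simplified])
qed

lemma distance_regular_inc: "distance_regular V E"
  unfolding distance_regular_def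
proof (intro conjI)
  show "finite V" unfolding inc_V_def using finite_points finite_blocks by simp
  show "gconnected V E" unfolding gconnected_def using walk_inc_dist by blast
  show "\<exists>b c. \<forall>u\<in>V. \<forall>v\<in>V.
      card {w\<in>V. E v w \<and> gdist V E u w + 1 = gdist V E u v} = c (gdist V E u v) \<and>
      card {w\<in>V. E v w \<and> gdist V E u w = gdist V E u v + 1} = b (gdist V E u v)"
    by (rule exI[of _ "intersection_b r lam"], rule exI[of _ "intersection_c r lam"])
      (intro ballI intersection_numbers)
qed

subsection \<open>Antipodal classes\<close>

definition point_fibres :: "('a + 'b) set set" where "point_fibres = (`) Inl ` P"
definition block_fibres :: "('a + 'b) set set" where "block_fibres = (`) Inr ` PC"

lemma fibres_partition: "partition_on V (point_fibres \<union> block_fibres)"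
  unfolding partition_on_def
proof (intro conjI)
  show "\<Union>(point_fibres \<union> block_fibres) = V"
    using partition_onD1[OF point_classes] partition_onD1[OF parallel_classes]
    unfolding inc_V_def point_fibres_def block_fibres_def by blast
  have "disjoint point_fibres" "disjoint block_fibres"
    using disjoint_image[OF _ partition_onD2[OF point_classes], of Inl]
      disjoint_image[OF _ partition_onD2[OF parallel_classes], of Inr]
    by (simp_all add: point_fibres_def block_fibres_def)
  then show "disjoint (point_fibres \<union> block_fibres)"
    by (rule disjoint_union) (auto simp: point_fibres_def block_fibres_def)
  show "{} \<notin> point_fibres \<union> block_fibres"
    using partition_onD3[OF point_classes] partition_onD3[OF parallel_classes]
    by (auto simp: point_fibres_def block_fibres_def)
qed

lemma same_fibre_simps:
  "same_part (point_fibres \<union> block_fibres) (Inl x) (Inl y) \<longleftrightarrow> same_part P x y"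
  "same_part (point_fibres \<union> block_fibres) (Inr a) (Inr b) \<longleftrightarrow> same_part PC a b"
  "\<not> same_part (point_fibres \<union> block_fibres) (Inl x) (Inr b)"
  "\<not> same_part (point_fibres \<union> block_fibres) (Inr b) (Inl x)"
  unfolding same_part_def point_fibres_def block_fibres_def by blast+

lemma same_fibre_iff:
  assumes "u \<in> V" "v \<in> V"
  shows "same_part (point_fibres \<union> block_fibres) u v \<longleftrightarrow> D u v = 0 \<or> D u v = 4"
proof (cases u; cases v)
  fix x y assume "u = Inl x" "v = Inl y"
  then show ?thesis using assms same_part_refl[OF point_classes, of x] by (auto simp: same_fibre_simps)
next
  fix a b assume "u = Inr a" "v = Inr b"
  then show ?thesis using assms same_part_refl[OF parallel_classes, of a] by (auto simp: same_fibre_simps)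
qed (simp_all add: same_fibre_simps)

lemma antirel_eq: "antirel V E 4 = {(u, v). same_part (point_fibres \<union> block_fibres) u v}"
proof -
  have "(u, v) \<in> antirel V E 4 \<longleftrightarrow> same_part (point_fibres \<union> block_fibres) u v" for u v
  proof (cases "u \<in> V \<and> v \<in> V")
    case True
    then show ?thesis unfolding antirel_def using same_fibre_iff gdist_eq_inc_dist by simp
  next
    case False
    then show ?thesis
      using partition_onD1[OF fibres_partition] unfolding antirel_def same_part_def by blast
  qed
  then show ?thesis by auto
qed

lemma has_diameter_4: "has_diameter V E 4"
  unfolding has_diameter_def
proof (intro conjI ballI)
  show "gconnected V E" unfolding gconnected_def using walk_inc_dist by blast
  show "gdist V E u v \<le> 4" if "u \<in> V" "v \<in> V" for u v
    using that gdist_eq_inc_dist inc_dist_le_4 by metis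
  obtain C where C: "C \<in> P" using card_point_classes r_ge_2 by fastforce
  then obtain x y where "x \<in> C" "y \<in> C" "x \<noteq> y"
    using card_point_class[OF C] m_ge_2 card_le_Suc0_iff_eq[OF finite_point_class[OF C]] by force
  moreover have "same_part P x y" using C calculation unfolding same_part_def by blast
  moreover have "x \<in> X" "y \<in> X" using C calculation point_class_subset by blast+
  ultimately show "\<exists>u\<in>V. \<exists>v\<in>V. gdist V E u v = 4"
    by (intro bexI[of _ "Inl x"] bexI[of _ "Inl y"]) (simp_all add: gdist_eq_inc_dist)
qed

lemma antipodal_blocks_eq: "antipodal_blocks V E 4 = point_fibres \<union> block_fibres"
  unfolding antipodal_blocks_def antirel_eq same_part_def
  by (rule partition_on_eq_quotient[OF fibres_partition])

lemma equiv_antirel: "equiv V (antirel V E 4)"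
  unfolding antirel_eq same_part_def by (rule equiv_partition_on[OF fibres_partition])

lemma point_block_fibres_adjacent:
  assumes "C \<in> P" "Q \<in> PC"
  shows "qadj E (Inl ` C) (Inr ` Q) \<and> qadj E (Inr ` Q) (Inl ` C)"
proof -
  obtain x where x: "x \<in> C" using point_class_nonempty[OF assms(1)] by blast
  then obtain b where "b \<in> Q" "x \<in> blk b"
    using assms point_class_subset block_through_point by blast
  with x show ?thesis unfolding qadj_def by force
qed

lemma point_block_fibres_disjoint: "point_fibres \<inter> block_fibres = {}"
proof (rule equals0I)
  fix F assume "F \<in> point_fibres \<inter> block_fibres"
  then obtain C Q where "C \<in> P" "F = Inl ` C" "F = Inr ` Q"
    unfolding point_fibres_def block_fibres_def by blast
  moreover obtain x where "x \<in> C" using point_class_nonempty[OF \<open>C \<in> P\<close>] by blast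
  ultimately show False by blast
qed

lemma qadj_fibres:
  assumes "A \<in> point_fibres \<union> block_fibres" "A' \<in> point_fibres \<union> block_fibres"
  shows "qadj E A A' \<longleftrightarrow>
    A \<in> point_fibres \<and> A' \<in> block_fibres \<or> A \<in> block_fibres \<and> A' \<in> point_fibres"
proof -
  have A: "A \<in> block_fibres \<longleftrightarrow> A \<notin> point_fibres" and A': "A' \<in> block_fibres \<longleftrightarrow> A' \<notin> point_fibres"
    using assms point_block_fibres_disjoint by blast+
  show ?thesis
  proof (cases "A \<in> point_fibres"; cases "A' \<in> point_fibres")
    assume "A \<in> point_fibres" "A' \<notin> point_fibres"
    then obtain C Q where "C \<in> P" "Q \<in> PC" "A = Inl ` C" "A' = Inr ` Q"
      using A' assms(2) unfolding point_fibres_def block_fibres_def by blast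
    then show ?thesis
      using point_block_fibres_adjacent A' \<open>A \<in> point_fibres\<close> \<open>A' \<notin> point_fibres\<close> by blast
  next
    assume "A \<notin> point_fibres" "A' \<in> point_fibres"
    then obtain C Q where "C \<in> P" "Q \<in> PC" "A' = Inl ` C" "A = Inr ` Q"
      using A assms(1) unfolding point_fibres_def block_fibres_def by blast
    then show ?thesis
      using point_block_fibres_adjacent A \<open>A \<notin> point_fibres\<close> \<open>A' \<in> point_fibres\<close> by blast
  qed (use A A' assms in \<open>auto simp: qadj_def point_fibres_def block_fibres_def\<close>)
qed

lemma cover_of_quotient: "is_cover_of_quotient V E 4"
  unfolding is_cover_of_quotient_def antipodal_blocks_eq
proof (intro ballI impI)
  fix A A' u
  assume A: "A \<in> point_fibres \<union> block_fibres" and A': "A' \<in> point_fibres \<union> block_fibres"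
    and adj: "qadj E A A'" and u: "u \<in> A"
  consider "A \<in> point_fibres" "A' \<in> block_fibres" | "A \<in> block_fibres" "A' \<in> point_fibres"
    using qadj_fibres[OF A A'] adj by blast
  then show "\<exists>!w. w \<in> A' \<and> E u w"
  proof cases
    case 1
    then obtain C Q x where "C \<in> P" "Q \<in> PC" "A' = Inr ` Q" "u = Inl x" "x \<in> C"
      using u unfolding point_fibres_def block_fibres_def by blast
    then have "card {b\<in>Q. x \<in> blk b} = 1"
      using point_class_subset by (intro card_parallel_blocks_through_point) auto
    then obtain b where b: "{b'\<in>Q. x \<in> blk b'} = {b}" by (rule card_1_singletonE)
    show ?thesis
    proof (rule ex1I[of _ "Inr b"])
      show "Inr b \<in> A' \<and> E u (Inr b)" using b \<open>A' = Inr ` Q\<close> \<open>u = Inl x\<close> by auto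
      fix w assume "w \<in> A' \<and> E u w"
      then obtain b' where "w = Inr b'" "b' \<in> Q" "x \<in> blk b'" using \<open>A' = Inr ` Q\<close> \<open>u = Inl x\<close> by auto
      then show "w = Inr b" using b by blast
    qed
  next
    case 2
    then obtain C Q b where "C \<in> P" "Q \<in> PC" "A' = Inl ` C" "u = Inr b" "b \<in> Q"
      using u unfolding point_fibres_def block_fibres_def by blast
    then obtain y where y: "blk b \<inter> C = {y}" using parallel_class_subset block_Int_class_singleton by blast
    show ?thesis
    proof (rule ex1I[of _ "Inl y"])
      show "Inl y \<in> A' \<and> E u (Inl y)" using y \<open>A' = Inl ` C\<close> \<open>u = Inr b\<close> by auto
      fix w assume "w \<in> A' \<and> E u w"
      then obtain z where "w = Inl z" "z \<in> C" "z \<in> blk b" using \<open>A' = Inl ` C\<close> \<open>u = Inr b\<close> by auto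
      then show "w = Inl y" using y by blast
    qed
  qed
qed

lemma quotient_is_Krr_inc: "quotient_is_Krr V E 4 r"
  unfolding quotient_is_Krr_def antipodal_blocks_eq
proof (intro exI conjI)
  show "point_fibres \<inter> block_fibres = {}" by (rule point_block_fibres_disjoint)
  show "card point_fibres = r"
    using card_point_classes by (simp add: point_fibres_def card_image inj_on_def inj_image_eq_iff)
  show "card block_fibres = r"
    using card_parallel_classes_eq by (simp add: block_fibres_def card_image inj_on_def inj_image_eq_iff)
qed (use qadj_fibres in auto)

lemma card_antipodal_blocks: "A \<in> antipodal_blocks V E 4 \<Longrightarrow> card A = m"
  unfolding antipodal_blocks_eq point_fibres_def block_fibres_def
  using card_point_class card_parallel_class_eq by (auto simp: card_image)

end

theorem lemma2p2:
  fixes X :: "'a set" and P :: "'a set set" and Bs :: "'b set" and blk :: "'b \<Rightarrow> 'a set"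
    and PC :: "'b set set" and r lam m :: nat
  assumes "RGD r lam m X P Bs blk PC"
    and "r = lam * m"
    and "lam \<ge> 1" and "m \<ge> 2"
    and "\<forall>C1\<in>PC. \<forall>C2\<in>PC. C1 \<noteq> C2 \<longrightarrow>
           (\<forall>b1\<in>C1. \<forall>b2\<in>C2. card (blk b1 \<inter> blk b2) = lam)"
  shows "distance_regular (inc_V X Bs) (inc_E blk) \<and> bipartite (inc_V X Bs) (inc_E blk) \<and>
         antipodal_cover_Krr (inc_V X Bs) (inc_E blk) r 4 m"
proof -
  interpret symmetric_rgd X P Bs blk PC r lam m
    by unfold_locales (fact assms)+
  show ?thesis
    unfolding antipodal_cover_Krr_def antipodal_def
    using distance_regular_inc bipartite_inc has_diameter_4 equiv_antirel cover_of_quotient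
      quotient_is_Krr_inc card_antipodal_blocks by blast
qed

end
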